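(* Let $A,\tilde A$ be irrational numbers and $\tau,\tilde t\in\mathbb R$. If for all $m,n\in\mathbb Z$ $$An+\tau\le m\iff \tilde An+\tilde t\le m,$$ then $A=\tilde A$ and $\tau=\tilde t$. *)

theory Defs
  imports Complex_Main
begin

end

theory Submission
  imports Defs "HOL-Analysis.Kronecker_Approximation_Theorem"
begin

text \<open>The hypothesis says exactly that the sequences \<open>\<lceil>A n + \<tau>\<rceil>\<close> and \<open>\<lceil>A' n + t'\<rceil>\<close>
  coincide. Then \<open>(A - A') n + (\<tau> - t')\<close> stays in \<open>(-1, 1)\<close> for all integers \<open>n\<close>, which
  forces \<open>A = A'\<close>. With equal slopes, distinct offsets \<open>\<tau> < t'\<close> are told apart by any \<open>n\<close>
  for which an integer lies in \<open>[A n + \<tau>, A n + t')\<close>; such an \<open>n\<close> exists because the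
  fractional parts of the multiples of an irrational number are dense.\<close>

lemma ceiling_eq_if_same_integer_upper_bounds:
  fixes x y :: "'a::floor_ceiling"
  assumes "\<And>m::int. x \<le> of_int m \<longleftrightarrow> y \<le> of_int m"
  shows "\<lceil>x\<rceil> = \<lceil>y\<rceil>"
  by (meson assms ceiling_le_iff order_antisym order_refl)

lemma abs_diff_less_one_if_ceiling_eq:
  fixes x y :: "'a::floor_ceiling"
  assumes "\<lceil>x\<rceil> = \<lceil>y\<rceil>"
  shows "\<bar>x - y\<bar> < 1"
  using ceiling_correct[of x] ceiling_correct[of y] assms by (simp add: abs_less_iff) linarith

lemma slope_eq_zero_if_bounded_on_ints:
  fixes a b c :: "'a::archimedean_field"
  assumes bounded: "\<And>n::int. \<bar>a * of_int n + b\<bar> < c"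
  shows "a = 0"
proof (rule ccontr)
  assume "a \<noteq> 0"
  then obtain n :: nat where n: "2 * c < of_nat n * \<bar>a\<bar>"
    using ex_less_of_nat_mult[of "\<bar>a\<bar>"] by auto
  have "\<bar>a * of_nat n\<bar> \<le> \<bar>a * of_nat n + b\<bar> + \<bar>b\<bar>"
    using abs_triangle_ineq4[of "a * of_nat n + b" b] by simp
  also have "\<dots> < 2 * c"
    using bounded[of "int n"] bounded[of 0] by simp
  finally show False
    using n by (simp add: abs_mult mult.commute)
qed

lemma irrational_multiples_separate_offsets:
  fixes A \<tau> t :: real
  assumes "A \<notin> \<rat>" and "\<tau> < t"
  obtains m n :: int where "A * of_int n + \<tau> \<le> of_int m" and "of_int m < A * of_int n + t"
proof -
  obtain h k :: int where "\<bar>of_int k * A - of_int h - (\<tau> + t) / 2\<bar> < (t - \<tau>) / 2"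
    using sequence_of_fractional_parts_is_dense[OF assms(1), of "(t - \<tau>) / 2" "(\<tau> + t) / 2"]
      assms(2) by (metis half_gt_zero diff_gt_0_iff_gt)
  then have "A * of_int (- k) + \<tau> \<le> of_int (- h)" and "of_int (- h) < A * of_int (- k) + t"
    by (auto simp: abs_less_iff field_simps)
  then show thesis ..
qed

lemma offset_eq_if_same_integer_upper_bounds:
  fixes A \<tau> t :: real
  assumes "A \<notin> \<rat>"
    and "\<And>m n :: int. A * of_int n + \<tau> \<le> of_int m \<longleftrightarrow> A * of_int n + t \<le> of_int m"
  shows "\<tau> = t"
proof -
  have False if "x < y" and "\<And>m n :: int. A * of_int n + x \<le> of_int m \<longleftrightarrow> A * of_int n + y \<le> of_int m"
    for x y
    using irrational_multiples_separate_offsets[OF assms(1) \<open>x < y\<close>] that(2) by fastforce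
  then show ?thesis
    using assms(2) by (metis linorder_cases)
qed

theorem proposition2:
  fixes A A' \<tau> t' :: real
  assumes "A \<notin> \<rat>" and "A' \<notin> \<rat>"
    and "\<And>m n :: int. (A * of_int n + \<tau> \<le> of_int m) \<longleftrightarrow> (A' * of_int n + t' \<le> of_int m)"
  shows "A = A' \<and> \<tau> = t'"
proof -
  have "\<lceil>A * of_int n + \<tau>\<rceil> = \<lceil>A' * of_int n + t'\<rceil>" for n :: int
    using assms(3) by (rule ceiling_eq_if_same_integer_upper_bounds)
  then have "\<bar>(A - A') * of_int n + (\<tau> - t')\<bar> < 1" for n :: int
    using abs_diff_less_one_if_ceiling_eq by (metis add_diff_add left_diff_distrib)
  then have "A - A' = 0"
    by (rule slope_eq_zero_if_bounded_on_ints)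
  moreover from this have "\<tau> = t'"
    using offset_eq_if_same_integer_upper_bounds[OF assms(1)] assms(3) by simp
  ultimately show ?thesis
    by simp
qed

end
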